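(* Let $T$ be a continuous linear operator on a Polish topological vector space $X$ with $\mathcal P_{T,*}(X)\neq\emptyset$, and let $F$ be a closed subset of $X$ such that (i) $F-F$ is dilation-invariant and nowhere dense in $X$; (ii) $T(F\setminus\ker^*(T))\subset F$; (iii) $T(\overline{F-F}\setminus\ker^*(T))\subset\overline{F-F}$. Then $\mathcal P_{T,*}(X\setminus F)$ is a dense $G_\delta$ subset of $\mathcal P_T(X)$.
   Context: $\mathcal P_T(X)$: $T$-invariant Borel probability measures with the Prokhorov topology; $\mathcal P_{T,*}(X)$: those with full support; $\mathcal P_{T,*}(A)=\{m\in\mathcal P_{T,*}(X): m(A)=1\}$. $\ker^*(T)=\bigcup_{k\in\mathbb N}\ker(T^k)$. $F-F=\{x-y:x,y\in F\}$. A set $A$ is dilation-invariant if $r\cdot A=A$ for every $r>0$. *)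

theory Defs
  imports "HOL-Probability.Probability"
begin

text \<open>A Polish topological vector space: a real vector space whose topology is induced by a
complete separable metric (class polish_space) and in which addition and scalar
multiplication are jointly continuous.\<close>

definition tvs_ops_continuous :: "'a::{real_vector, topological_space} itself \<Rightarrow> bool" where
  "tvs_ops_continuous _ \<longleftrightarrow>
     continuous_on UNIV (\<lambda>p::'a \<times> 'a. fst p + snd p) \<and>
     continuous_on UNIV (\<lambda>p::real \<times> 'a. fst p *\<^sub>R snd p)"

definition borel_probs :: "'a::topological_space measure set" where
  "borel_probs = {M. sets M = sets borel \<and> prob_space M}"

definition inv_probs :: "('a::topological_space \<Rightarrow> 'a) \<Rightarrow> 'a measure set" where
  "inv_probs T = {M \<in> borel_probs. distr M borel T = M}"

definition full_support :: "'a::topological_space measure \<Rightarrow> bool" where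
  "full_support M \<longleftrightarrow> (\<forall>U. open U \<and> U \<noteq> {} \<longrightarrow> emeasure M U > 0)"

definition inv_probs_full :: "('a::topological_space \<Rightarrow> 'a) \<Rightarrow> 'a measure set" where
  "inv_probs_full T = {M \<in> inv_probs T. full_support M}"

definition inv_probs_full_on :: "('a::topological_space \<Rightarrow> 'a) \<Rightarrow> 'a set \<Rightarrow> 'a measure set" where
  "inv_probs_full_on T A = {M \<in> inv_probs_full T. emeasure M A = 1}"

definition eps_nbhd :: "'a::metric_space set \<Rightarrow> real \<Rightarrow> 'a set" where
  "eps_nbhd A e = {x. \<exists>a\<in>A. dist x a < e}"

definition prokhorov_dist :: "'a::metric_space measure \<Rightarrow> 'a measure \<Rightarrow> real" where
  "prokhorov_dist M N = Inf {e. e > 0 \<and> (\<forall>A\<in>sets borel.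
      measure M A \<le> measure N (eps_nbhd A e) + e \<and>
      measure N A \<le> measure M (eps_nbhd A e) + e)}"

definition prokhorov_topology :: "'a::metric_space measure topology" where
  "prokhorov_topology = topology (\<lambda>U. U \<subseteq> borel_probs \<and>
      (\<forall>M\<in>U. \<exists>e>0. \<forall>N\<in>borel_probs. prokhorov_dist M N < e \<longrightarrow> N \<in> U))"

definition ker_star :: "('a::real_vector \<Rightarrow> 'a) \<Rightarrow> 'a set" where
  "ker_star T = (\<Union>k::nat. {x. (T ^^ k) x = 0})"

definition set_diffs :: "'a::real_vector set \<Rightarrow> 'a set" where
  "set_diffs F = {x - y | x y. x \<in> F \<and> y \<in> F}"

definition dilation_invariant :: "'a::real_vector set \<Rightarrow> bool" where
  "dilation_invariant A \<longleftrightarrow> (\<forall>r>0. (\<lambda>x. r *\<^sub>R x) ` A = A)"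

definition nowhere_dense :: "'a::topological_space set \<Rightarrow> bool" where
  "nowhere_dense A \<longleftrightarrow> interior (closure A) = {}"

end

theory Submission
  imports Defs
begin

text \<open>
  For closed \<open>C\<close> the map \<open>M \<mapsto> M(C)\<close> is upper semicontinuous in the Prokhorov topology,
  so having full support and not charging \<open>F\<close> are countably many open conditions
  (\<open>M(F) < 1/(k+1)\<close>, and \<open>M(-B) < 1\<close> for \<open>B\<close> in a countable basis): this is the \<open>G\<^sub>\<delta>\<close> part.

  For density, condition a given full-support invariant measure \<open>\<mu>\<close> on the complement of
  \<open>D = closure (F - F)\<close>. Invariance makes \<open>ker\<^sup>*(T) - {0}\<close> a \<open>\<mu>\<close>-null set, so hypothesis (iii)
  makes \<open>D\<close> invariant modulo \<open>\<mu>\<close>; the conditioned measure \<open>\<nu>\<close> is therefore invariant, and it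
  keeps full support because \<open>D\<close> is nowhere dense. Now let \<open>m\<close> be any invariant measure and take
  \<open>x \<sim> m\<close>, \<open>y \<sim> \<nu>\<close> and \<open>t\<close> uniform on \<open>[0,1]\<close>, independent. The law of \<open>x + (t/r) y\<close> is invariant by
  linearity, has full support because \<open>\<nu>\<close> has, and tends to \<open>m\<close> as \<open>r \<rightarrow> \<infinity>\<close>. It does not
  charge \<open>F\<close>: almost surely \<open>y \<notin> F - F\<close>, and then dilation invariance of \<open>F - F\<close> lets the line
  \<open>x + \<real> y\<close> meet \<open>F\<close> at most once, a null event for \<open>t\<close>.
\<close>

section \<open>The Prokhorov topology\<close>

lemma istopology_prokhorov:
  "istopology (\<lambda>U. U \<subseteq> (borel_probs :: 'a::metric_space measure set) \<and>
      (\<forall>M\<in>U. \<exists>e>0. \<forall>N\<in>borel_probs. prokhorov_dist M N < e \<longrightarrow> N \<in> U))"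
  unfolding istopology_def
proof safe
  fix U V and M :: "'a measure"
  assume "\<forall>M\<in>U. \<exists>e>0. \<forall>N\<in>borel_probs. prokhorov_dist M N < e \<longrightarrow> N \<in> U" "M \<in> U"
    and "\<forall>M\<in>V. \<exists>e>0. \<forall>N\<in>borel_probs. prokhorov_dist M N < e \<longrightarrow> N \<in> V" "M \<in> V"
  then obtain e1 e2 where "e1 > 0" "\<forall>N\<in>borel_probs. prokhorov_dist M N < e1 \<longrightarrow> N \<in> U"
    and "e2 > 0" "\<forall>N\<in>borel_probs. prokhorov_dist M N < e2 \<longrightarrow> N \<in> V"
    by meson
  then show "\<exists>e>0. \<forall>N\<in>borel_probs. prokhorov_dist M N < e \<longrightarrow> N \<in> U \<inter> V"
    by (intro exI[of _ "min e1 e2"]) auto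
next
  fix \<U> and M :: "'a measure" and U
  assume "\<forall>U\<in>\<U>. U \<subseteq> borel_probs \<and> (\<forall>M\<in>U. \<exists>e>0. \<forall>N\<in>borel_probs. prokhorov_dist M N < e \<longrightarrow> N \<in> U)"
    and "M \<in> U" "U \<in> \<U>"
  then show "\<exists>e>0. \<forall>N\<in>borel_probs. prokhorov_dist M N < e \<longrightarrow> N \<in> \<Union>\<U>"
    by (meson UnionI)
next
  fix \<U> and M :: "'a measure" and U
  assume "\<forall>U\<in>\<U>. U \<subseteq> borel_probs \<and> (\<forall>M\<in>U. \<exists>e>0. \<forall>N\<in>borel_probs. prokhorov_dist M N < e \<longrightarrow> N \<in> U)"
    and "M \<in> U" "U \<in> \<U>"
  then show "M \<in> borel_probs" by blast
qed auto

lemma openin_prokhorov_topology: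
  "openin prokhorov_topology U \<longleftrightarrow> U \<subseteq> borel_probs \<and>
      (\<forall>M\<in>U. \<exists>e>0. \<forall>N\<in>borel_probs. prokhorov_dist M N < e \<longrightarrow> N \<in> U)"
  unfolding prokhorov_topology_def by (subst topology_inverse'[OF istopology_prokhorov]) simp

lemma topspace_prokhorov_topology: "topspace prokhorov_topology = borel_probs"
proof
  show "topspace prokhorov_topology \<subseteq> borel_probs"
    unfolding topspace_def openin_prokhorov_topology by auto
  have "openin prokhorov_topology borel_probs"
    unfolding openin_prokhorov_topology by (auto intro: exI[of _ 1])
  then show "borel_probs \<subseteq> topspace prokhorov_topology" by (rule openin_subset)
qed

lemma prokhorov_dist_le:
  fixes M N :: "'a::metric_space measure"
  assumes "e > 0"
    and "\<And>A. A \<in> sets borel \<Longrightarrow> measure M A \<le> measure N (eps_nbhd A e) + e"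
    and "\<And>A. A \<in> sets borel \<Longrightarrow> measure N A \<le> measure M (eps_nbhd A e) + e"
  shows "prokhorov_dist M N \<le> e"
  unfolding prokhorov_dist_def
  by (rule cInf_lower) (use assms in \<open>auto intro!: bdd_belowI[of _ 0]\<close>)

lemma prokhorov_dist_commute: "prokhorov_dist M N = prokhorov_dist N M"
  unfolding prokhorov_dist_def by (simp add: conj_commute)

lemma prokhorov_dist_lessE:
  fixes M N :: "'a::metric_space measure"
  assumes "M \<in> borel_probs" "N \<in> borel_probs" "prokhorov_dist M N < e"
  obtains e' where "0 < e'" "e' < e"
    "\<And>A. A \<in> sets borel \<Longrightarrow> measure N A \<le> measure M (eps_nbhd A e') + e'"
proof -
  let ?E = "{e. e > 0 \<and> (\<forall>A\<in>sets borel.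
      measure M A \<le> measure N (eps_nbhd A e) + e \<and> measure N A \<le> measure M (eps_nbhd A e) + e)}"
  have "prob_space M" "prob_space N" using assms(1,2) by (auto simp: borel_probs_def)
  then have "1 \<in> ?E"
    by (auto simp: prob_space.prob_le_1 intro: order_trans[OF _ le_add_same_cancel2[THEN iffD2]])
  then have "?E \<noteq> {}" by blast
  from cInf_lessD[OF this assms(3)[unfolded prokhorov_dist_def]] that show ?thesis by blast
qed

lemma eps_nbhd_mono: "e1 \<le> e2 \<Longrightarrow> eps_nbhd A e1 \<subseteq> eps_nbhd A e2"
  unfolding eps_nbhd_def by force

lemma open_eps_nbhd: "open (eps_nbhd A e)"
proof -
  have "eps_nbhd A e = (\<Union>a\<in>A. ball a e)"
    unfolding eps_nbhd_def ball_def by (auto simp: dist_commute)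
  then show ?thesis by auto
qed

lemma sets_eps_nbhd [measurable]: "eps_nbhd A e \<in> sets borel"
  by (rule borel_open[OF open_eps_nbhd])

lemma Inter_eps_nbhd_closed:
  assumes "closed C"
  shows "(\<Inter>k. eps_nbhd C (1 / Suc k)) = C"
proof
  show "C \<subseteq> (\<Inter>k. eps_nbhd C (1 / Suc k))" unfolding eps_nbhd_def by force
  show "(\<Inter>k. eps_nbhd C (1 / Suc k)) \<subseteq> C"
  proof
    fix x assume x: "x \<in> (\<Inter>k. eps_nbhd C (1 / Suc k))"
    have "x \<in> closure C"
      unfolding closure_approachable
    proof (intro allI impI)
      fix \<epsilon> :: real assume "\<epsilon> > 0"
      then obtain k where k: "1 / Suc k < \<epsilon>" using nat_approx_posE by blast
      from x obtain a where "a \<in> C" "dist x a < 1 / Suc k" unfolding eps_nbhd_def by auto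
      with k show "\<exists>y\<in>C. dist y x < \<epsilon>" by (metis dist_commute order.strict_trans)
    qed
    then show "x \<in> C" using assms by (simp add: closure_closed)
  qed
qed

lemma openin_prokhorov_measure_less:
  fixes C :: "'a::metric_space set"
  assumes "closed C"
  shows "openin prokhorov_topology {M\<in>borel_probs. measure M C < c}"
  unfolding openin_prokhorov_topology
proof safe
  fix M assume M: "M \<in> borel_probs" "measure M C < c"
  then interpret prob_space M by (simp add: borel_probs_def)
  have sM: "sets M = sets borel" using M by (simp add: borel_probs_def)
  define d where "d = c - measure M C"
  have d: "d > 0" using M d_def by auto
  have "(\<lambda>k. measure M (eps_nbhd C (1 / Suc k))) \<longlonglongrightarrow> measure M C"
  proof -
    have "decseq (\<lambda>k. eps_nbhd C (1 / Suc k))"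
      unfolding decseq_def by (intro allI impI eps_nbhd_mono) (auto simp: frac_le)
    moreover have "range (\<lambda>k. eps_nbhd C (1 / Suc k)) \<subseteq> sets M" by (auto simp: sM)
    ultimately show ?thesis
      using finite_Lim_measure_decseq Inter_eps_nbhd_closed[OF assms] by metis
  qed
  from order_tendstoD(2)[OF this, of "measure M C + d / 2"] d obtain k
    where k: "measure M (eps_nbhd C (1 / Suc k)) < measure M C + d / 2"
    by (auto simp: eventually_sequentially)
  show "\<exists>e>0. \<forall>N\<in>borel_probs. prokhorov_dist M N < e \<longrightarrow> N \<in> {M \<in> borel_probs. measure M C < c}"
  proof (intro exI[of _ "min (1 / Suc k) (d / 2)"] conjI ballI impI)
    fix N assume N: "N \<in> borel_probs" "prokhorov_dist M N < min (1 / Suc k) (d / 2)"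
    then obtain e' where e': "0 < e'" "e' < min (1 / Suc k) (d / 2)"
      and le: "measure N C \<le> measure M (eps_nbhd C e') + e'"
      using prokhorov_dist_lessE[OF M(1)] assms by (metis borel_closed)
    have "measure M (eps_nbhd C e') \<le> measure M (eps_nbhd C (1 / Suc k))"
      using e' by (intro finite_measure_mono eps_nbhd_mono) (auto simp: sM)
    moreover have "e' < d / 2" using e'(2) by simp
    ultimately have "measure N C < c" using le k d_def by linarith
    then show "N \<in> {M \<in> borel_probs. measure M C < c}" using N by simp
  qed (use d in simp)
qed

lemma prokhorov_closure_of_eqI:
  assumes "S \<subseteq> borel_probs" "A \<subseteq> S"
    and approx: "\<And>M e. M \<in> S \<Longrightarrow> e > 0 \<Longrightarrow> \<exists>N\<in>A. prokhorov_dist M N < e"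
  shows "subtopology prokhorov_topology S closure_of A = S"
proof
  show "subtopology prokhorov_topology S closure_of A \<subseteq> S"
    using closure_of_subset_topspace assms(1) by (fastforce simp: topspace_prokhorov_topology)
  show "S \<subseteq> subtopology prokhorov_topology S closure_of A"
  proof
    fix M assume M: "M \<in> S"
    show "M \<in> subtopology prokhorov_topology S closure_of A"
      unfolding in_closure_of
    proof (intro conjI allI impI)
      show "M \<in> topspace (subtopology prokhorov_topology S)"
        using M assms(1) by (auto simp: topspace_prokhorov_topology)
      fix U assume U: "M \<in> U \<and> openin (subtopology prokhorov_topology S) U"
      then obtain V where V: "openin prokhorov_topology V" "U = V \<inter> S"
        unfolding openin_subtopology by blast
      with U obtain e where "e > 0" "\<And>N. N \<in> borel_probs \<Longrightarrow> prokhorov_dist M N < e \<Longrightarrow> N \<in> V"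
        unfolding openin_prokhorov_topology by blast
      with approx[OF M] obtain N where "N \<in> A" "N \<in> V" using assms by blast
      then show "\<exists>N. N \<in> A \<and> N \<in> U" using V assms(2) by blast
    qed
  qed
qed

lemma measure_distr_le_eps_nbhd:
  fixes f g :: "'b \<Rightarrow> 'a::{metric_space, second_countable_topology}"
  assumes "prob_space P" "f \<in> borel_measurable P" "g \<in> borel_measurable P"
    and "measure P {\<omega>\<in>space P. e \<le> dist (f \<omega>) (g \<omega>)} \<le> e" "A \<in> sets borel"
  shows "measure (distr P borel f) A \<le> measure (distr P borel g) (eps_nbhd A e) + e"
proof -
  interpret prob_space P by fact
  let ?far = "{\<omega>\<in>space P. e \<le> dist (f \<omega>) (g \<omega>)}"
  have [measurable]: "f \<in> borel_measurable P" "g \<in> borel_measurable P" "A \<in> sets borel"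
    using assms by auto
  have "f -` A \<inter> space P \<subseteq> (g -` eps_nbhd A e \<inter> space P) \<union> ?far"
  proof
    fix \<omega> assume \<omega>: "\<omega> \<in> f -` A \<inter> space P"
    show "\<omega> \<in> (g -` eps_nbhd A e \<inter> space P) \<union> ?far"
    proof (cases "e \<le> dist (f \<omega>) (g \<omega>)")
      case False
      then have "g \<omega> \<in> eps_nbhd A e"
        using \<omega> by (auto simp: eps_nbhd_def dist_commute intro!: bexI[of _ "f \<omega>"])
      then show ?thesis using \<omega> by blast
    qed (use \<omega> in blast)
  qed
  then have "measure P (f -` A \<inter> space P) \<le> measure P ((g -` eps_nbhd A e \<inter> space P) \<union> ?far)"
    by (intro finite_measure_mono) auto
  also have "\<dots> \<le> measure P (g -` eps_nbhd A e \<inter> space P) + measure P ?far"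
    by (intro measure_Un_le) auto
  finally show ?thesis using assms(4) by (simp add: measure_distr)
qed

lemma prokhorov_dist_distr_le:
  fixes f g :: "'b \<Rightarrow> 'a::{metric_space, second_countable_topology}"
  assumes "prob_space P" "f \<in> borel_measurable P" "g \<in> borel_measurable P" "e > 0"
    and "measure P {\<omega>\<in>space P. e \<le> dist (f \<omega>) (g \<omega>)} \<le> e"
  shows "prokhorov_dist (distr P borel f) (distr P borel g) \<le> e"
proof (rule prokhorov_dist_le[OF assms(4)])
  show "measure (distr P borel f) A \<le> measure (distr P borel g) (eps_nbhd A e) + e"
    if "A \<in> sets borel" for A
    using measure_distr_le_eps_nbhd[OF assms(1-3,5) that] .
  show "measure (distr P borel g) A \<le> measure (distr P borel f) (eps_nbhd A e) + e"
    if "A \<in> sets borel" for A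
    using measure_distr_le_eps_nbhd[OF assms(1,3,2) _ that] assms(5) by (simp add: dist_commute)
qed

lemma measure_dist_ge_tendsto_zero:
  fixes f :: "nat \<Rightarrow> 'b \<Rightarrow> 'a::{metric_space, second_countable_topology}"
  assumes "finite_measure P" "\<And>n. f n \<in> borel_measurable P" "g \<in> borel_measurable P" "e > 0"
    and "\<And>\<omega>. \<omega> \<in> space P \<Longrightarrow> (\<lambda>n. f n \<omega>) \<longlonglongrightarrow> g \<omega>"
  shows "(\<lambda>n. measure P {\<omega>\<in>space P. e \<le> dist (f n \<omega>) (g \<omega>)}) \<longlonglongrightarrow> 0"
proof -
  interpret finite_measure P by fact
  let ?far = "\<lambda>n. {\<omega>\<in>space P. e \<le> dist (f n \<omega>) (g \<omega>)}"
  have [measurable]: "\<And>n. f n \<in> borel_measurable P" "g \<in> borel_measurable P"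
    using assms by auto
  have "(\<lambda>n. integral\<^sup>L P (indicator (?far n) :: _ \<Rightarrow> real)) \<longlonglongrightarrow> integral\<^sup>L P (\<lambda>_. 0 :: real)"
  proof (rule integral_dominated_convergence[where w = "\<lambda>_. 1"])
    show "AE \<omega> in P. (\<lambda>n. indicator (?far n) \<omega> :: real) \<longlonglongrightarrow> 0"
    proof (rule AE_I2)
      fix \<omega> assume "\<omega> \<in> space P"
      from tendstoD[OF assms(5)[OF this] assms(4)]
      have "eventually (\<lambda>n. indicator (?far n) \<omega> = (0::real)) sequentially"
        by (rule eventually_mono) (simp add: indicator_def)
      then show "(\<lambda>n. indicator (?far n) \<omega> :: real) \<longlonglongrightarrow> 0"
        by (rule tendsto_eventually)
    qed
  qed auto
  then show ?thesis by simp
qed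

section \<open>Full-support measures not charging a closed set\<close>

lemma emeasure_Compl_eq_1_iff:
  assumes "prob_space M" "sets M = sets borel" "C \<in> sets borel"
  shows "emeasure M (UNIV - C) = 1 \<longleftrightarrow> measure M C = 0"
proof -
  interpret prob_space M by fact
  have "space M = UNIV" using sets_eq_imp_space_eq[OF assms(2)] by simp
  then have "measure M (UNIV - C) = 1 - measure M C" using prob_compl assms by simp
  then have "emeasure M (UNIV - C) = ennreal (1 - measure M C)" by (simp add: emeasure_eq_measure)
  then show ?thesis using prob_le_1[of C] by (simp add: ennreal_1[symmetric] del: ennreal_1)
qed

lemma full_support_iff_basis:
  assumes "topological_basis \<B>" "prob_space M" "sets M = sets borel"
  shows "full_support M \<longleftrightarrow> (\<forall>B\<in>\<B> - {{}}. measure M (- B) < 1)"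
proof -
  interpret prob_space M by fact
  have pos_iff: "emeasure M U > 0 \<longleftrightarrow> measure M (- U) < 1" if "open U" for U
  proof -
    have "measure M (- U) = 1 - measure M U"
      using prob_compl[of U] that sets_eq_imp_space_eq[OF assms(3)] assms(3)
      by (simp add: Compl_eq_Diff_UNIV)
    then show ?thesis by (simp add: emeasure_eq_measure)
  qed
  have "full_support M \<longleftrightarrow> (\<forall>B\<in>\<B> - {{}}. emeasure M B > 0)"
  proof
    assume "\<forall>B\<in>\<B> - {{}}. emeasure M B > 0"
    moreover have "\<exists>B\<in>\<B> - {{}}. B \<subseteq> U" if "open U" "U \<noteq> {}" for U
      using that topological_basisE[OF assms(1)] by (metis Diff_iff empty_iff ex_in_conv singletonD)
    moreover have "emeasure M B \<le> emeasure M U" if "B \<subseteq> U" "open U" for B U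
      using that assms(3) by (intro emeasure_mono) auto
    ultimately show "full_support M" unfolding full_support_def by (meson order.strict_trans2)
  qed (use assms(1) topological_basis_open in \<open>auto simp: full_support_def\<close>)
  also have "\<dots> \<longleftrightarrow> (\<forall>B\<in>\<B> - {{}}. measure M (- B) < 1)"
    using pos_iff assms(1) topological_basis_open by blast
  finally show ?thesis .
qed

lemma gdelta_in_full_support_null:
  fixes F :: "'a::{metric_space, second_countable_topology} set"
  assumes "closed F"
  shows "gdelta_in prokhorov_topology {M\<in>borel_probs. full_support M \<and> measure M F = 0}"
proof -
  obtain \<B> :: "'a set set" where \<B>: "countable \<B>" "topological_basis \<B>"
    using ex_countable_basis by blast
  define \<F> where "\<F> = range (\<lambda>k::nat. {M\<in>borel_probs. measure M F < 1 / Suc k}) \<union>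
     (\<lambda>B. {M\<in>borel_probs. measure M (- B) < 1}) ` (\<B> - {{}})"
  have "openin prokhorov_topology Q" if "Q \<in> \<F>" for Q
    using that unfolding \<F>_def
    by (auto intro!: openin_prokhorov_measure_less assms topological_basis_open[OF \<B>(2)])
  moreover have "countable \<F>" "\<F> \<noteq> {}" unfolding \<F>_def using \<B>(1) by auto
  ultimately have "gdelta_in prokhorov_topology (\<Inter>\<F>)"
    by (intro gdelta_in_Inter open_imp_gdelta_in) auto
  moreover have "\<Inter>\<F> = {M\<in>borel_probs. full_support M \<and> measure M F = 0}"
  proof -
    have null_iff: "measure M F = 0 \<longleftrightarrow> (\<forall>k::nat. measure M F < 1 / Suc k)" for M
    proof
      assume small: "\<forall>k::nat. measure M F < 1 / Suc k"
      show "measure M F = 0"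
      proof (rule ccontr)
        assume "measure M F \<noteq> 0"
        then have "measure M F > 0" using measure_nonneg[of M F] by linarith
        then obtain k where "1 / Suc k < measure M F" using nat_approx_posE by blast
        with small show False by (meson not_less_iff_gr_or_eq)
      qed
    qed simp
    have mem_Inter: "M \<in> \<Inter>\<F> \<longleftrightarrow> M \<in> borel_probs \<and> (\<forall>k::nat. measure M F < 1 / Suc k) \<and>
        (\<forall>B\<in>\<B> - {{}}. measure M (- B) < 1)" for M
      unfolding \<F>_def by blast
    show ?thesis
    proof (intro set_eqI)
      fix M
      show "M \<in> \<Inter>\<F> \<longleftrightarrow> M \<in> {M\<in>borel_probs. full_support M \<and> measure M F = 0}"
        unfolding mem_Inter using full_support_iff_basis[OF \<B>(2), of M] null_iff[of M]
        by (auto simp: borel_probs_def)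
    qed
  qed
  ultimately show ?thesis by simp
qed

lemma inv_probs_full_on_Compl:
  assumes "F \<in> sets borel"
  shows "inv_probs_full_on T (UNIV - F) =
    {M\<in>borel_probs. full_support M \<and> measure M F = 0} \<inter> inv_probs T"
  using emeasure_Compl_eq_1_iff[OF _ _ assms]
  unfolding inv_probs_full_on_def inv_probs_full_def inv_probs_def borel_probs_def by auto

section \<open>Conditioning an invariant measure\<close>

lemma emeasure_vimage_invariant:
  assumes "sets \<mu> = sets borel" "T \<in> borel_measurable borel" "distr \<mu> borel T = \<mu>"
    and "A \<in> sets borel"
  shows "emeasure \<mu> (T -` A) = emeasure \<mu> A"
proof -
  have "emeasure \<mu> A = emeasure (distr \<mu> borel T) A" using assms(3) by simp
  also have "\<dots> = emeasure \<mu> (T -` A \<inter> space \<mu>)"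
    using assms by (intro emeasure_distr) (auto simp: measurable_cong_sets[OF assms(1) refl])
  finally show ?thesis using sets_eq_imp_space_eq[OF assms(1)] by simp
qed

lemma emeasure_vimage_funpow_invariant:
  assumes "sets \<mu> = sets borel" "T \<in> borel_measurable borel" "distr \<mu> borel T = \<mu>"
    and "A \<in> sets borel"
  shows "emeasure \<mu> ((T ^^ k) -` A) = emeasure \<mu> A"
  using assms(4)
proof (induction k arbitrary: A)
  case (Suc k)
  have eq: "(T ^^ Suc k) -` A = (T ^^ k) -` (T -` A)" by auto
  have "T -` A \<in> sets borel" using measurable_sets[OF assms(2) Suc.prems] by simp
  then show ?case
    unfolding eq using Suc.IH emeasure_vimage_invariant[OF assms(1-3) Suc.prems] by simp
qed simp

lemma ker_star_diff_zero_null: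
  fixes T :: "'a::{t1_space, real_vector} \<Rightarrow> 'a"
  assumes "linear T" "finite_measure \<mu>" "sets \<mu> = sets borel" "T \<in> borel_measurable borel"
    and "distr \<mu> borel T = \<mu>"
  shows "ker_star T - {0} \<in> null_sets \<mu>"
proof -
  interpret finite_measure \<mu> by fact
  have "(T ^^ k) -` {0} - {0} \<in> null_sets \<mu>" for k
  proof -
    have "(T ^^ k) 0 = 0" by (induction k) (simp_all add: linear_0[OF assms(1)])
    then have "emeasure \<mu> ((T ^^ k) -` {0} - {0}) = emeasure \<mu> ((T ^^ k) -` {0}) - emeasure \<mu> {0}"
      using measurable_sets[OF measurable_compose_n[OF assms(4)], of "{0}" k] assms(3)
      by (intro emeasure_Diff) auto
    then show ?thesis
      using emeasure_vimage_funpow_invariant[OF assms(3-5), of "{0}"] assms(3)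
        measurable_sets[OF measurable_compose_n[OF assms(4)], of "{0}" k]
      by (auto simp: null_sets_def)
  qed
  then have "(\<Union>k. (T ^^ k) -` {0} - {0}) \<in> null_sets \<mu>" by blast
  moreover have "ker_star T - {0} = (\<Union>k. (T ^^ k) -` {0} - {0})"
    unfolding ker_star_def by auto
  ultimately show ?thesis by simp
qed

lemma AE_invariant_set:
  assumes "finite_measure \<mu>" "sets \<mu> = sets borel" "T \<in> borel_measurable borel"
    and "distr \<mu> borel T = \<mu>" "D \<in> sets borel"
    and forward: "AE x in \<mu>. x \<in> D \<longrightarrow> T x \<in> D"
  shows "AE x in \<mu>. T x \<in> D \<longleftrightarrow> x \<in> D"
proof -
  interpret finite_measure \<mu> by fact
  have TD: "T -` D \<in> sets \<mu>" using measurable_sets[OF assms(3,5)] assms(2) by simp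
  have D: "D \<in> sets \<mu>" using assms(2,5) by simp
  have "emeasure \<mu> (T -` D \<inter> D) = emeasure \<mu> D"
    using forward TD D by (intro emeasure_eq_AE) auto
  moreover have "emeasure \<mu> (T -` D) = emeasure \<mu> D"
    by (rule emeasure_vimage_invariant[OF assms(2-5)])
  ultimately have "emeasure \<mu> (T -` D - (T -` D \<inter> D)) = 0"
    using TD D by (subst emeasure_Diff) auto
  then have "T -` D - D \<in> null_sets \<mu>" using TD D by (auto simp: null_sets_def Diff_Int)
  then have "AE x in \<mu>. T x \<in> D \<longrightarrow> x \<in> D" by (rule AE_I') auto
  with forward show ?thesis by eventually_elim auto
qed

lemma uniform_measure_invariant:
  assumes "sets \<mu> = sets borel" "T \<in> borel_measurable borel" "distr \<mu> borel T = \<mu>"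
    and "U \<in> sets borel" "AE x in \<mu>. T x \<in> U \<longleftrightarrow> x \<in> U"
  shows "distr (uniform_measure \<mu> U) borel T = uniform_measure \<mu> U"
proof (rule measure_eqI)
  fix A assume "A \<in> sets (distr (uniform_measure \<mu> U) borel T)"
  then have A: "A \<in> sets borel" by simp
  have TA: "T -` A \<in> sets borel" using measurable_sets[OF assms(2) A] by simp
  have "sets (uniform_measure \<mu> U) = sets borel" using assms(1) by simp
  then have Tm: "T \<in> measurable (uniform_measure \<mu> U) borel"
    using measurable_cong_sets[OF _ refl] assms(2) by blast
  have space: "space (uniform_measure \<mu> U) = UNIV"
    using sets_eq_imp_space_eq[OF assms(1)] by simp
  have "emeasure (distr (uniform_measure \<mu> U) borel T) A = emeasure (uniform_measure \<mu> U) (T -` A)"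
    using emeasure_distr[OF Tm A] space by simp
  also have "\<dots> = emeasure \<mu> (U \<inter> T -` A) / emeasure \<mu> U"
    using TA assms(1,4) by simp
  also have "emeasure \<mu> (U \<inter> T -` A) = emeasure \<mu> (T -` (U \<inter> A))"
    using assms(1,4,5) TA measurable_sets[OF assms(2), of "U \<inter> A"] A
    by (intro emeasure_eq_AE) auto
  also have "\<dots> = emeasure \<mu> (U \<inter> A)"
    using assms(4) A by (intro emeasure_vimage_invariant[OF assms(1-3)]) auto
  also have "\<dots> / emeasure \<mu> U = emeasure (uniform_measure \<mu> U) A"
    using A assms(1,4) by simp
  finally show "emeasure (distr (uniform_measure \<mu> U) borel T) A = emeasure (uniform_measure \<mu> U) A" .
qed (simp add: assms(1))

lemma full_support_uniform_measure_Compl: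
  assumes "finite_measure \<mu>" "full_support \<mu>" "sets \<mu> = sets borel" "closed D" "interior D = {}"
  shows "full_support (uniform_measure \<mu> (- D))"
  unfolding full_support_def
proof (intro allI impI)
  fix V :: "'a set" assume V: "open V \<and> V \<noteq> {}"
  then have "- D \<inter> V \<noteq> {}" using assms(5) interior_maximal[of V D] by auto
  then have "emeasure \<mu> (- D \<inter> V) > 0"
    using assms(2,4) V unfolding full_support_def by (simp add: open_Int open_Compl)
  moreover have "emeasure \<mu> (- D) \<noteq> \<infinity>"
    using finite_measure.emeasure_finite[OF assms(1)] by simp
  ultimately show "emeasure (uniform_measure \<mu> (- D)) V > 0"
    using assms(3,4) V by (simp add: borel_closed ennreal_zero_less_divide less_top)
qed

lemma exists_inv_probs_full_null:
  fixes T :: "'a::{t1_space, real_vector} \<Rightarrow> 'a"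
  assumes "linear T" "continuous_on UNIV T" "\<mu> \<in> inv_probs_full T"
    and "closed D" "interior D = {}" "T ` (D - ker_star T) \<subseteq> D"
  shows "\<exists>\<nu>\<in>inv_probs_full T. emeasure \<nu> D = 0"
proof -
  from assms(3) have sets: "sets \<mu> = sets borel" and "prob_space \<mu>"
    and inv: "distr \<mu> borel T = \<mu>" and supp: "full_support \<mu>"
    by (auto simp: inv_probs_full_def inv_probs_def borel_probs_def)
  interpret prob_space \<mu> by fact
  have T: "T \<in> borel_measurable borel" by (rule borel_measurable_continuous_onI[OF assms(2)])
  have D: "D \<in> sets borel" using assms(4) by (rule borel_closed)
  have "AE x in \<mu>. x \<notin> ker_star T - {0}"
    by (intro AE_not_in ker_star_diff_zero_null[OF assms(1) finite_measure_axioms sets T inv])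
  \<comment> \<open>a point of \<open>D\<close> outside \<open>ker_star T - {0}\<close> is either outside \<open>ker_star T\<close> or \<open>0 = T 0\<close>\<close>
  then have "AE x in \<mu>. x \<in> D \<longrightarrow> T x \<in> D"
    by (rule eventually_mono) (use assms(6) linear_0[OF assms(1)] in auto)
  from AE_invariant_set[OF finite_measure_axioms sets T inv D this]
  have invariant_Compl: "AE x in \<mu>. T x \<in> - D \<longleftrightarrow> x \<in> - D" by simp
  define \<nu> where "\<nu> = uniform_measure \<mu> (- D)"
  have "D \<noteq> UNIV" using assms(5) by auto
  then have "- D \<noteq> {}" by auto
  then have "emeasure \<mu> (- D) \<noteq> 0"
    using supp assms(4) by (auto simp: full_support_def)
  then have "prob_space \<nu>" unfolding \<nu>_def by (intro prob_space_uniform_measure) auto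
  moreover have "distr \<nu> borel T = \<nu>"
    unfolding \<nu>_def using D by (intro uniform_measure_invariant[OF sets T inv _ invariant_Compl]) auto
  moreover have "full_support \<nu>"
    unfolding \<nu>_def by (rule full_support_uniform_measure_Compl[OF finite_measure_axioms supp sets assms(4,5)])
  moreover have "emeasure \<nu> D = 0" "sets \<nu> = sets borel"
    unfolding \<nu>_def using D sets by simp_all
  ultimately show ?thesis by (auto simp: inv_probs_full_def inv_probs_def borel_probs_def)
qed

section \<open>Random perturbations\<close>

lemma continuous_on_tvs_add:
  fixes f g :: "'b::topological_space \<Rightarrow> 'a::{real_vector, topological_space}"
  assumes "tvs_ops_continuous TYPE('a)" "continuous_on S f" "continuous_on S g"
  shows "continuous_on S (\<lambda>x. f x + g x)"
proof -
  have "continuous_on UNIV (\<lambda>p::'a \<times> 'a. fst p + snd p)"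
    using assms(1) unfolding tvs_ops_continuous_def by simp
  from continuous_on_compose[OF continuous_on_Pair[OF assms(2,3)] continuous_on_subset[OF this]]
  show ?thesis by (simp add: comp_def)
qed

lemma continuous_on_tvs_scaleR:
  fixes f :: "'b::topological_space \<Rightarrow> real" and g :: "'b \<Rightarrow> 'a::{real_vector, topological_space}"
  assumes "tvs_ops_continuous TYPE('a)" "continuous_on S f" "continuous_on S g"
  shows "continuous_on S (\<lambda>x. f x *\<^sub>R g x)"
proof -
  have "continuous_on UNIV (\<lambda>p::real \<times> 'a. fst p *\<^sub>R snd p)"
    using assms(1) unfolding tvs_ops_continuous_def by simp
  from continuous_on_compose[OF continuous_on_Pair[OF assms(2,3)] continuous_on_subset[OF this]]
  show ?thesis by (simp add: comp_def)
qed

lemma line_meets_at_most_once: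
  assumes "dilation_invariant (set_diffs F)" "y \<notin> set_diffs F"
    and "x + s *\<^sub>R y \<in> F" "x + t *\<^sub>R y \<in> F"
  shows "s = t"
proof (rule ccontr)
  have scaled: "y \<in> set_diffs F" if "c > 0" "c *\<^sub>R y \<in> set_diffs F" for c
  proof -
    have "(\<lambda>z. (1 / c) *\<^sub>R z) ` set_diffs F = set_diffs F"
      using assms(1) that(1) unfolding dilation_invariant_def by auto
    then have "(1 / c) *\<^sub>R (c *\<^sub>R y) \<in> set_diffs F" using that(2) by blast
    then show ?thesis using that(1) by simp
  qed
  have "(s - t) *\<^sub>R y = (x + s *\<^sub>R y) - (x + t *\<^sub>R y)" "(t - s) *\<^sub>R y = (x + t *\<^sub>R y) - (x + s *\<^sub>R y)"
    by (simp_all add: scaleR_diff_left)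
  then have "(s - t) *\<^sub>R y \<in> set_diffs F" "(t - s) *\<^sub>R y \<in> set_diffs F"
    using assms(3,4) unfolding set_diffs_def by blast+
  moreover assume "s \<noteq> t"
  then have "s - t > 0 \<or> t - s > 0" by linarith
  ultimately show False using scaled assms(2) by blast
qed

definition unit_uniform :: "real measure" where
  "unit_uniform = uniform_measure lborel {0..1}"

lemma prob_space_unit_uniform: "prob_space unit_uniform"
  unfolding unit_uniform_def by (intro prob_space_uniform_measure) auto

lemma sets_unit_uniform [simp, measurable_cong]: "sets unit_uniform = sets borel"
  unfolding unit_uniform_def by simp

lemma emeasure_unit_uniform_subsingleton:
  assumes "\<And>s t. s \<in> S \<Longrightarrow> t \<in> S \<Longrightarrow> s = t"
  shows "emeasure unit_uniform S = 0"
proof (cases "S = {}")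
  case False
  with assms obtain t where "S = {t}" by blast
  moreover have "emeasure lborel ({0..1} \<inter> {t}) = 0"
    using emeasure_mono[of "{0..1} \<inter> {t}" "{t}" lborel] by auto
  ultimately show ?thesis unfolding unit_uniform_def by simp
qed simp

lemma emeasure_unit_uniform_pos:
  assumes "open B" "1/2 \<in> B"
  shows "emeasure unit_uniform B > 0"
proof -
  obtain \<epsilon> where \<epsilon>: "\<epsilon> > 0" "ball (1/2) \<epsilon> \<subseteq> B" using assms open_contains_ball by blast
  define \<delta> where "\<delta> = min \<epsilon> (1/2) / 2"
  have \<delta>: "\<delta> > 0" "\<delta> < \<epsilon>" "\<delta> \<le> 1/4" using \<epsilon> unfolding \<delta>_def by auto
  have "{1/2 .. 1/2 + \<delta>} \<subseteq> {0..1} \<inter> B"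
    using \<delta> \<epsilon>(2) by (auto simp: dist_real_def subset_iff)
  then have "emeasure lborel {1/2 .. 1/2 + \<delta>} \<le> emeasure lborel ({0..1} \<inter> B)"
    using assms by (intro emeasure_mono) auto
  also have "\<dots> = emeasure unit_uniform B"
    unfolding unit_uniform_def using assms by (simp add: divide_ennreal_def)
  finally have "ennreal \<delta> \<le> emeasure unit_uniform B" using \<delta> by simp
  moreover have "0 < ennreal \<delta>" using \<delta> by simp
  ultimately show ?thesis by (rule order.strict_trans2[rotated])
qed

definition perturb :: "real \<Rightarrow> 'a::real_vector \<times> 'a \<times> real \<Rightarrow> 'a" where
  "perturb r = (\<lambda>(x, y, t). x + (t / r) *\<^sub>R y)"

lemma continuous_on_perturb:
  assumes "tvs_ops_continuous TYPE('a::{real_vector, topological_space})"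
  shows "continuous_on UNIV (perturb r :: 'a \<times> 'a \<times> real \<Rightarrow> 'a)"
proof -
  have "perturb r = (\<lambda>\<omega>::'a \<times> 'a \<times> real. fst \<omega> + (snd (snd \<omega>) / r) *\<^sub>R fst (snd \<omega>))"
    by (auto simp: perturb_def)
  moreover have "continuous_on UNIV (\<lambda>\<omega>::'a \<times> 'a \<times> real. snd (snd \<omega>) / r)"
    unfolding divide_inverse by (intro continuous_intros)
  ultimately show ?thesis
    by (simp add: continuous_on_tvs_add[OF assms] continuous_on_tvs_scaleR[OF assms]
        continuous_on_fst continuous_on_snd continuous_on_id)
qed

locale perturbation =
  fixes m \<nu> :: "'a::{real_vector, metric_space, second_countable_topology} measure"
  assumes tvs: "tvs_ops_continuous TYPE('a)"
    and m_borel_probs: "m \<in> borel_probs" and \<nu>_borel_probs: "\<nu> \<in> borel_probs"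
begin

abbreviation noise :: "('a \<times> real) measure" where
  "noise \<equiv> \<nu> \<Otimes>\<^sub>M unit_uniform"

abbreviation joint :: "('a \<times> 'a \<times> real) measure" where
  "joint \<equiv> m \<Otimes>\<^sub>M noise"

definition law :: "real \<Rightarrow> 'a measure" where
  "law r = distr joint borel (perturb r)"

lemma sets_m [measurable_cong]: "sets m = sets borel" and prob_space_m: "prob_space m"
  using m_borel_probs by (auto simp: borel_probs_def)

lemma sets_\<nu> [measurable_cong]: "sets \<nu> = sets borel" and prob_space_\<nu>: "prob_space \<nu>"
  using \<nu>_borel_probs by (auto simp: borel_probs_def)

lemma sets_noise': "sets noise = sets (borel \<Otimes>\<^sub>M borel)"
  by (rule sets_pair_measure_cong[OF sets_\<nu> sets_unit_uniform])

lemma sets_noise: "sets noise = sets borel"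
  using sets_noise' borel_prod by metis

lemma sets_joint': "sets joint = sets (borel \<Otimes>\<^sub>M (borel \<Otimes>\<^sub>M borel))"
  by (rule sets_pair_measure_cong[OF sets_m sets_noise'])

lemma sets_joint: "sets joint = sets borel"
  using sets_pair_measure_cong[OF sets_m sets_noise] borel_prod by metis

lemma space_joint: "space joint = UNIV"
  using sets_eq_imp_space_eq[OF sets_joint] by simp

lemma prob_space_noise: "prob_space noise"
  by (intro prob_space_pair prob_space_\<nu> prob_space_unit_uniform)

lemma prob_space_joint: "prob_space joint"
  by (intro prob_space_pair prob_space_m prob_space_noise)

lemma measurable_perturb: "perturb r \<in> borel_measurable joint"
  using borel_measurable_continuous_onI[OF continuous_on_perturb[OF tvs]]
    measurable_cong_sets[OF sets_joint refl] by blast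

lemma law_in_borel_probs: "law r \<in> borel_probs"
  unfolding borel_probs_def law_def
  using prob_space.prob_space_distr[OF prob_space_joint measurable_perturb] by simp

lemma emeasure_law: "A \<in> sets borel \<Longrightarrow> emeasure (law r) A = emeasure joint (perturb r -` A)"
  unfolding law_def using emeasure_distr[OF measurable_perturb] space_joint by simp

lemma law_invariant:
  assumes "linear T" "continuous_on UNIV T" "distr m borel T = m" "distr \<nu> borel T = \<nu>"
  shows "distr (law r) borel T = law r"
proof -
  have T [measurable]: "T \<in> borel_measurable borel"
    by (rule borel_measurable_continuous_onI[OF assms(2)])
  have noise_inv: "distr noise (borel \<Otimes>\<^sub>M borel) (\<lambda>(y, t). (T y, t)) = noise"
  proof -
    have "distr \<nu> borel T \<Otimes>\<^sub>M distr unit_uniform borel (\<lambda>t. t) =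
        distr noise (borel \<Otimes>\<^sub>M borel) (\<lambda>(y, t). (T y, t))"
      by (intro pair_measure_distr)
        (auto simp: distr_id2 prob_space_imp_sigma_finite[OF prob_space_unit_uniform])
    then show ?thesis using assms(4) by (simp add: distr_id2)
  qed
  let ?h = "\<lambda>(x, y, t). (T x, T y, t)"
  have joint_inv: "distr joint (borel \<Otimes>\<^sub>M (borel \<Otimes>\<^sub>M borel)) ?h = joint"
  proof -
    have "distr m borel T \<Otimes>\<^sub>M distr noise (borel \<Otimes>\<^sub>M borel) (\<lambda>(y, t). (T y, t)) =
        distr joint (borel \<Otimes>\<^sub>M (borel \<Otimes>\<^sub>M borel)) (\<lambda>(x, y). (T x, (\<lambda>(y, t). (T y, t)) y))"
      using noise_inv prob_space_imp_sigma_finite[OF prob_space_noise]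
      by (intro pair_measure_distr) (auto simp: measurable_cong_sets[OF sets_noise' refl])
    moreover have "(\<lambda>(x, y). (T x, (\<lambda>(y, t). (T y, t)) y)) = ?h" by auto
    ultimately show ?thesis using noise_inv assms(3) by (metis (no_types))
  qed
  have h [measurable]: "?h \<in> measurable joint (borel \<Otimes>\<^sub>M (borel \<Otimes>\<^sub>M borel))"
    by (simp add: measurable_cong_sets[OF sets_joint' refl])
  have "distr (law r) borel T = distr joint borel (T \<circ> perturb r)"
    unfolding law_def by (rule distr_distr) (auto intro: measurable_perturb)
  also have "\<dots> = distr joint borel (perturb r \<circ> ?h)"
    by (rule distr_cong)
      (auto simp: perturb_def linear_add[OF assms(1)] linear_scale[OF assms(1)])
  also have "\<dots> = distr (distr joint (borel \<Otimes>\<^sub>M (borel \<Otimes>\<^sub>M borel)) ?h) borel (perturb r)"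
    using measurable_perturb by (intro distr_distr[symmetric])
      (auto simp: measurable_cong_sets[OF sets_joint' refl])
  also have "\<dots> = law r" unfolding joint_inv law_def ..
  finally show ?thesis .
qed


lemma emeasure_joint_pos:
  assumes "G \<in> sets joint" "\<And>x. emeasure noise (Pair x -` G) > 0"
  shows "emeasure joint G > 0"
proof (rule ccontr)
  have sf: "sigma_finite_measure noise" by (rule prob_space_imp_sigma_finite[OF prob_space_noise])
  assume "\<not> emeasure joint G > 0"
  then have "(\<integral>\<^sup>+x. emeasure noise (Pair x -` G) \<partial>m) = 0"
    using sigma_finite_measure.emeasure_pair_measure_alt[OF sf assms(1)] by simp
  then have "AE x in m. emeasure noise (Pair x -` G) = 0"
    using nn_integral_0_iff_AE[OF sigma_finite_measure.measurable_emeasure_Pair[OF sf assms(1)]]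
    by simp
  then have "AE x in m. False" by (rule eventually_mono) (use assms(2) in \<open>auto simp: less_le\<close>)
  then show False using prob_space.AE_False[OF prob_space_m] by simp
qed

lemma full_support_law:
  assumes "full_support \<nu>" "r \<noteq> 0"
  shows "full_support (law r)"
  unfolding full_support_def
proof (intro allI impI)
  fix V :: "'a set" assume V: "open V \<and> V \<noteq> {}"
  then obtain v where v: "v \<in> V" by auto
  let ?G = "perturb r -` V"
  have G: "?G \<in> sets joint" using measurable_sets[OF measurable_perturb, of V r] V space_joint by auto
  have "emeasure noise (Pair x -` ?G) > 0" for x
  proof -
    let ?W = "Pair x -` ?G"
    have "?W = (\<lambda>p. x + (snd p / r) *\<^sub>R fst p) -` V" by (auto simp: perturb_def)
    moreover have "continuous_on UNIV (\<lambda>p::'a \<times> real. x + (snd p / r) *\<^sub>R fst p)"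
      unfolding divide_inverse
      by (intro continuous_on_tvs_add[OF tvs] continuous_on_tvs_scaleR[OF tvs] continuous_intros)
    ultimately have "open ?W" using V by (auto intro: open_vimage)
    \<comment> \<open>at time \<open>t = 1/2\<close> the direction \<open>y\<^sub>0\<close> moves \<open>x\<close> exactly to \<open>v\<close>\<close>
    define y\<^sub>0 where "y\<^sub>0 = (2 * r) *\<^sub>R (v - x)"
    have "x + ((1/2) / r) *\<^sub>R y\<^sub>0 = v" using assms(2) by (simp add: y\<^sub>0_def)
    then have "(y\<^sub>0, 1/2) \<in> ?W" using v by (simp add: perturb_def)
    with \<open>open ?W\<close> obtain A B where AB: "open A" "open B" "(y\<^sub>0, 1/2) \<in> A \<times> B" "A \<times> B \<subseteq> ?W"
      using open_prod_elim by metis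
    have "0 < emeasure \<nu> A * emeasure unit_uniform B"
      using assms(1) AB emeasure_unit_uniform_pos[of B]
      unfolding full_support_def by (auto simp: ennreal_zero_less_mult_iff)
    also have "\<dots> = emeasure noise (A \<times> B)"
      using AB sets_\<nu> prob_space_imp_sigma_finite[OF prob_space_unit_uniform]
      by (intro sigma_finite_measure.emeasure_pair_measure_Times[symmetric]) auto
    also have "\<dots> \<le> emeasure noise ?W"
      using AB sets_Pair1[OF G] by (intro emeasure_mono) auto
    finally show ?thesis .
  qed
  then show "emeasure (law r) V > 0" using emeasure_joint_pos[OF G] emeasure_law V by auto
qed

lemma emeasure_law_null:
  assumes "F \<in> sets borel" "dilation_invariant (set_diffs F)"
    and "D \<in> sets borel" "set_diffs F \<subseteq> D" "emeasure \<nu> D = 0" "r \<noteq> 0"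
  shows "emeasure (law r) F = 0"
proof -
  let ?G = "perturb r -` F"
  have G: "?G \<in> sets joint" using measurable_sets[OF measurable_perturb assms(1)] space_joint by simp
  have "emeasure noise (Pair x -` ?G) = 0" for x
  proof -
    have "emeasure noise (Pair x -` ?G) = (\<integral>\<^sup>+y. emeasure unit_uniform (Pair y -` Pair x -` ?G) \<partial>\<nu>)"
      using sets_Pair1[OF G] prob_space_imp_sigma_finite[OF prob_space_unit_uniform]
      by (intro sigma_finite_measure.emeasure_pair_measure_alt) auto
    also have "\<dots> = (\<integral>\<^sup>+y. 0 \<partial>\<nu>)"
    proof (rule nn_integral_cong_AE)
      have "AE y in \<nu>. y \<notin> D"
        using assms(3,5) sets_\<nu> by (intro AE_not_in) (auto simp: null_sets_def)
      then show "AE y in \<nu>. emeasure unit_uniform (Pair y -` Pair x -` ?G) = 0"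
      proof (rule eventually_mono)
        fix y assume "y \<notin> D"
        then have "s = t" if "x + (s / r) *\<^sub>R y \<in> F" "x + (t / r) *\<^sub>R y \<in> F" for s t
          using line_meets_at_most_once[OF assms(2) _ that] assms(4,6) by auto
        then show "emeasure unit_uniform (Pair y -` Pair x -` ?G) = 0"
          by (intro emeasure_unit_uniform_subsingleton) (auto simp: perturb_def)
      qed
    qed
    finally show ?thesis by simp
  qed
  then have "emeasure joint ?G = 0"
    using prob_space_imp_sigma_finite[OF prob_space_noise] G
    by (simp add: sigma_finite_measure.emeasure_pair_measure_alt)
  then show ?thesis using emeasure_law[OF assms(1)] by simp
qed

lemma law_approx:
  assumes "e > 0"
  shows "\<exists>r>0. prokhorov_dist m (law r) < e"
proof -
  interpret prob_space joint by (rule prob_space_joint)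
  have distr_fst: "distr joint borel fst = m"
    using prob_space.distr_pair_fst[OF prob_space_noise, of m] sets_m
    by (metis distr_cong)
  have [measurable]: "fst \<in> borel_measurable joint"
    using measurable_fst[of m noise] by (simp add: measurable_cong_sets[OF refl sets_m])
  have "(\<lambda>n. perturb (Suc n) \<omega>) \<longlonglongrightarrow> fst \<omega>" for \<omega> :: "'a \<times> 'a \<times> real"
  proof -
    obtain x y t where \<omega>: "\<omega> = (x, y, t)" by (cases \<omega>) auto
    have lim: "(\<lambda>n. t / real (Suc n)) \<longlonglongrightarrow> 0"
      using tendsto_mult[OF tendsto_const LIMSEQ_inverse_real_of_nat, of t]
      by (simp add: divide_inverse)
    have "continuous_on UNIV (\<lambda>s::real. x + s *\<^sub>R y)"
      by (intro continuous_on_tvs_add[OF tvs] continuous_on_tvs_scaleR[OF tvs] continuous_intros)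
    from continuous_on_tendsto_compose[OF this lim]
    have "(\<lambda>n. x + (t / real (Suc n)) *\<^sub>R y) \<longlonglongrightarrow> x + 0 *\<^sub>R y" by simp
    then show ?thesis by (simp add: \<omega> perturb_def)
  qed
  from measure_dist_ge_tendsto_zero[OF finite_measure_axioms measurable_perturb _ half_gt_zero[OF assms] this]
  have "eventually (\<lambda>n. measure joint {\<omega>\<in>space joint. e / 2 \<le> dist (perturb (Suc n) \<omega>) (fst \<omega>)}
      < e / 2) sequentially"
    using assms by (intro order_tendstoD) auto
  then obtain n where
    n: "measure joint {\<omega>\<in>space joint. e / 2 \<le> dist (perturb (Suc n) \<omega>) (fst \<omega>)} < e / 2"
    unfolding eventually_sequentially by blast
  have "prokhorov_dist (distr joint borel (perturb (Suc n))) (distr joint borel fst) \<le> e / 2"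
    using n assms by (intro prokhorov_dist_distr_le[OF prob_space_joint measurable_perturb]) auto
  then have "prokhorov_dist m (law (Suc n)) \<le> e / 2"
    unfolding law_def distr_fst by (simp add: prokhorov_dist_commute)
  then show ?thesis using assms by (intro exI[of _ "real (Suc n)"]) auto
qed

end

theorem lemma3:
  fixes T :: "'a::{polish_space, real_vector} \<Rightarrow> 'a" and F :: "'a set"
  assumes tvs: "tvs_ops_continuous TYPE('a)"
    and lin: "linear T" and cont: "continuous_on UNIV T"
    and ne: "inv_probs_full T \<noteq> {}"
    and closedF: "closed F"
    and dil: "dilation_invariant (set_diffs F)"
    and nwd: "nowhere_dense (set_diffs F)"
    and invF: "T ` (F - ker_star T) \<subseteq> F"
    and invD: "T ` (closure (set_diffs F) - ker_star T) \<subseteq> closure (set_diffs F)"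
  shows "gdelta_in (subtopology prokhorov_topology (inv_probs T)) (inv_probs_full_on T (UNIV - F))
    \<and> (subtopology prokhorov_topology (inv_probs T)) closure_of (inv_probs_full_on T (UNIV - F))
        = inv_probs T"
proof
  have full_on: "inv_probs_full_on T (UNIV - F) =
      {M\<in>borel_probs. full_support M \<and> measure M F = 0} \<inter> inv_probs T"
    using closedF by (intro inv_probs_full_on_Compl) auto
  then show "gdelta_in (subtopology prokhorov_topology (inv_probs T)) (inv_probs_full_on T (UNIV - F))"
    using gdelta_in_full_support_null[OF closedF] by (auto simp: gdelta_in_subtopology)
  obtain \<nu> where \<nu>: "\<nu> \<in> inv_probs_full T" "emeasure \<nu> (closure (set_diffs F)) = 0"
    using ne exists_inv_probs_full_null[OF lin cont _ _ nwd[unfolded nowhere_dense_def] invD] by auto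
  show "subtopology prokhorov_topology (inv_probs T) closure_of (inv_probs_full_on T (UNIV - F))
      = inv_probs T"
  proof (rule prokhorov_closure_of_eqI)
    fix M and e :: real assume M: "M \<in> inv_probs T" and "e > 0"
    interpret perturbation M \<nu>
      using tvs M \<nu> by unfold_locales (auto simp: inv_probs_def inv_probs_full_def)
    obtain r where r: "r > 0" "prokhorov_dist M (law r) < e" using law_approx[OF \<open>e > 0\<close>] by blast
    have "emeasure (law r) F = 0"
      using closedF dil \<nu>(2) r(1) closure_subset
      by (intro emeasure_law_null) auto
    then have "law r \<in> inv_probs_full_on T (UNIV - F)"
      unfolding full_on inv_probs_def
      using law_in_borel_probs full_support_law[of r] law_invariant[OF lin cont] M \<nu> r(1)
      by (auto simp: measure_def inv_probs_def inv_probs_full_def)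
    with r show "\<exists>N\<in>inv_probs_full_on T (UNIV - F). prokhorov_dist M N < e" by blast
  qed (auto simp: inv_probs_def full_on)
qed

end
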